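(* There exists a constant $C>0$ such that for all $v=(v^1,\dots,v^{n_{\mathcal E}})\in L^2_{H^1}(\mathcal N;\mathbb{R}^3)$ and all $V\in\mathbb{R}^{3n_{\mathcal V}}$, \[ \|v\|_{L^2(\mathcal N;\mathbb{R}^3)}\le C\Big(\|v'\|^2_{L^2(\mathcal N;\mathbb{R}^3)}+\Big|\int_{\mathcal N}v\Big|^2+\big|v(0)-(A^-_I)^TV\big|^2+\big|v(\ell)-(A^+_I)^TV\big|^2\Big)^{1/2}, \] where $v'=(\partial_sv^1,\dots,\partial_sv^{n_{\mathcal E}})$, $v(0)=[v^1(0),\dots,v^{n_{\mathcal E}}(0)]^T\in\mathbb{R}^{3n_{\mathcal E}}$, $v(\ell)=[v^1(\ell^1),\dots,v^{n_{\mathcal E}}(\ell^{n_{\mathcal E}})]^T\in\mathbb{R}^{3n_{\mathcal E}}$, and $|\cdot|$ denotes the Euclidean norm.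
   Context: A finite connected graph with vertices $j=1,\dots,n_{\mathcal V}$ and oriented edges $i=1,\dots,n_{\mathcal E}$; edge $i$ has length $\ell^i>0$ and is identified with the interval $[0,\ell^i]$, $s=0$ corresponding to the vertex it leaves and $s=\ell^i$ to the vertex it enters. $J_j^-$ ($J_j^+$) is the set of edges leaving (entering) vertex $j$. $A^+_{I}\in\mathbb{R}^{3n_{\mathcal V}\times 3n_{\mathcal E}}$ is the block matrix whose $3\times3$ block in block row $j$, block column $i$ is $I_3$ if $i\in J_j^+$ and $0$ otherwise; $A^-_I$ is defined likewise with $J_j^-$. $L^2(\mathcal N;\mathbb{R}^3)=\prod_iL^2(0,\ell^i;\mathbb{R}^3)$, $L^2_{H^1}(\mathcal N;\mathbb{R}^3)=\prod_iH^1(0,\ell^i;\mathbb{R}^3)$ (no continuity at vertices), with norms $\|y\|=(\sum_i\|y^i\|^2)^{1/2}$; $\int_{\mathcal N}v=\sum_i\int_0^{\ell^i}v^i\,ds$. *)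

theory Defs
  imports "HOL-Analysis.Analysis"
begin

(* Graph: vertices {1..nV}, edges {1..nE}; edge i leaves vertex src i and enters tgt i. *)

definition graph_edges :: "nat \<Rightarrow> (nat \<Rightarrow> nat) \<Rightarrow> (nat \<Rightarrow> nat) \<Rightarrow> (nat \<times> nat) set" where
  "graph_edges nE src tgt = (\<lambda>i. (src i, tgt i)) ` {1..nE}"

definition connected_graph :: "nat \<Rightarrow> nat \<Rightarrow> (nat \<Rightarrow> nat) \<Rightarrow> (nat \<Rightarrow> nat) \<Rightarrow> bool" where
  "connected_graph nV nE src tgt \<longleftrightarrow> nV \<ge> 1 \<and>
     (\<forall>i\<in>{1..nE}. src i \<in> {1..nV} \<and> tgt i \<in> {1..nV}) \<and>
     (\<forall>j\<in>{1..nV}. \<forall>k\<in>{1..nV}.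
        (j, k) \<in> (graph_edges nE src tgt \<union> (graph_edges nE src tgt)\<inverse>)\<^sup>*)"

definition J_minus :: "nat \<Rightarrow> (nat \<Rightarrow> nat) \<Rightarrow> nat \<Rightarrow> nat set" where
  "J_minus nE src j = {i\<in>{1..nE}. src i = j}"

definition J_plus :: "nat \<Rightarrow> (nat \<Rightarrow> nat) \<Rightarrow> nat \<Rightarrow> nat set" where
  "J_plus nE tgt j = {i\<in>{1..nE}. tgt i = j}"

(* i-th 3-block of (A_I^-)^T V and (A_I^+)^T V, for V = (V_1,...,V_nV) in (R^3)^nV *)
definition AmT :: "nat \<Rightarrow> nat \<Rightarrow> (nat \<Rightarrow> nat) \<Rightarrow> (nat \<Rightarrow> real^3) \<Rightarrow> nat \<Rightarrow> real^3" where
  "AmT nV nE src V i = (\<Sum>j\<in>{j\<in>{1..nV}. i \<in> J_minus nE src j}. V j)"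

definition ApT :: "nat \<Rightarrow> nat \<Rightarrow> (nat \<Rightarrow> nat) \<Rightarrow> (nat \<Rightarrow> real^3) \<Rightarrow> nat \<Rightarrow> real^3" where
  "ApT nV nE tgt V i = (\<Sum>j\<in>{j\<in>{1..nV}. i \<in> J_plus nE tgt j}. V j)"

(* v \<in> H^1(0,l;R^3) with weak derivative w: w measurable and square integrable on [0,l],
   and v(s) = v(0) + \<integral>_0^s w  for s in [0,l] (absolutely continuous representative). *)
definition H1_with_deriv :: "real \<Rightarrow> (real \<Rightarrow> real^3) \<Rightarrow> (real \<Rightarrow> real^3) \<Rightarrow> bool" where
  "H1_with_deriv l v w \<longleftrightarrow>
     set_borel_measurable lborel {0..l} w \<and>
     set_integrable lborel {0..l} (\<lambda>s. (norm (w s))\<^sup>2) \<and>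
     (\<forall>s\<in>{0..l}. v s = v 0 + (LINT t:{0..s}|lborel. w t))"

definition L2N_sq :: "nat \<Rightarrow> (nat \<Rightarrow> real) \<Rightarrow> (nat \<Rightarrow> real \<Rightarrow> real^3) \<Rightarrow> real" where
  "L2N_sq nE len v = (\<Sum>i\<in>{1..nE}. LINT s:{0..len i}|lborel. (norm (v i s))\<^sup>2)"

definition intN :: "nat \<Rightarrow> (nat \<Rightarrow> real) \<Rightarrow> (nat \<Rightarrow> real \<Rightarrow> real^3) \<Rightarrow> real^3" where
  "intN nE len v = (\<Sum>i\<in>{1..nE}. LINT s:{0..len i}|lborel. v i s)"

end

theory Submission
  imports Defs
begin

text \<open>
  Fix \<open>\<rho> > 0\<close> bounding each of the four terms on the right by \<open>\<rho>\<^sup>2\<close>. On an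
  edge, \<open>|w| \<le> \<rho>/2 + |w|\<^sup>2/(2\<rho>)\<close> shows that \<open>v\<^sup>i\<close> oscillates by \<open>O(\<rho>)\<close>;
  with the vertex conditions this gives \<open>|V(src i) - V(tgt i)| = O(\<rho>)\<close> on every edge,
  and along paths of the connected graph \<open>|V\<^sub>j - V\<^sub>1| = O(\<rho>)\<close> for every vertex.
  So all of \<open>v\<close> lies within \<open>O(\<rho>)\<close> of the single vector \<open>c = V\<^sub>1\<close>; as
  \<open>|\<integral>\<^sub>N v| \<le> \<rho>\<close>, also \<open>|c| = O(\<rho>)\<close>, hence \<open>|v| = O(\<rho>)\<close> pointwise and
  \<open>\<parallel>v\<parallel> = O(\<rho>)\<close>. Choosing \<open>\<rho>\<close> as the square root of the right-hand side
  (or letting \<open>\<rho> \<rightarrow> 0\<close> when it vanishes) yields the inequality.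
\<close>

lemma H1_with_derivD:
  assumes H: "H1_with_deriv l v w"
  shows "w integrable_on {0..l}"
    and "(\<lambda>s. (norm (w s))\<^sup>2) integrable_on {0..l}"
    and "(LINT s:{0..l}|lborel. (norm (w s))\<^sup>2) = integral {0..l} (\<lambda>s. (norm (w s))\<^sup>2)"
    and "\<And>s. s \<in> {0..l} \<Longrightarrow> v s = v 0 + integral {0..s} w"
    and "continuous_on {0..l} v"
proof -
  have meas: "set_borel_measurable lborel {0..l} w"
    and sq: "set_integrable lborel {0..l} (\<lambda>s. (norm (w s))\<^sup>2)"
    and rep: "\<forall>s\<in>{0..l}. v s = v 0 + (LINT t:{0..s}|lborel. w t)"
    using H unfolding H1_with_deriv_def by blast+
  have "set_integrable lborel {0..l} (\<lambda>s. 1 + (norm (w s))\<^sup>2)"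
    using borel_integrable_atLeastAtMost'[OF continuous_on_const, of 0 l "1::real"] sq
    unfolding set_integrable_def by (simp add: distrib_left)
  then have wi: "set_integrable lborel {0..l} w"
  proof (rule set_integrable_bound[OF _ meas], intro AE_I2 impI)
    fix x
    \<comment> \<open>square integrability gives integrability on a bounded interval, via \<open>t \<le> 1 + t\<^sup>2\<close>\<close>
    have "2 * norm (w x) \<le> (norm (w x))\<^sup>2 + 1"
      using zero_le_power2[of "norm (w x) - 1"] by (simp add: power2_diff)
    then have "norm (w x) \<le> 1 + (norm (w x))\<^sup>2"
      using norm_ge_zero[of "w x"] by linarith
    then show "norm (w x) \<le> norm (1 + (norm (w x))\<^sup>2)" by simp
  qed
  show wI: "w integrable_on {0..l}"
    using set_borel_integral_eq_integral(1)[OF wi] .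
  show "(\<lambda>s. (norm (w s))\<^sup>2) integrable_on {0..l}"
    "(LINT s:{0..l}|lborel. (norm (w s))\<^sup>2) = integral {0..l} (\<lambda>s. (norm (w s))\<^sup>2)"
    using set_borel_integral_eq_integral[OF sq] by blast+
  show rep': "v s = v 0 + integral {0..s} w" if "s \<in> {0..l}" for s
  proof -
    have "set_integrable lborel {0..s} w"
      by (rule set_integrable_subset[OF wi]) (use that in auto)
    then show ?thesis
      using rep that set_borel_integral_eq_integral(2) by metis
  qed
  have "continuous_on {0..l} (\<lambda>s. v 0 + integral {0..s} w)"
    by (intro continuous_intros indefinite_integral_continuous_1 wI)
  then show "continuous_on {0..l} v"
    by (rule continuous_on_eq) (erule rep'[symmetric])
qed

lemma H1_with_deriv_oscillation_le:
  assumes H: "H1_with_deriv l v w" and \<rho>: "0 < \<rho>"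
    and W: "(LINT x:{0..l}|lborel. (norm (w x))\<^sup>2) \<le> \<rho>\<^sup>2"
    and s: "s \<in> {0..l}"
  shows "norm (v s - v 0) \<le> (l + 1) / 2 * \<rho>"
proof -
  let ?g = "\<lambda>x. (norm (w x))\<^sup>2"
  let ?h = "\<lambda>x. \<rho> / 2 + ?g x / (2 * \<rho>)"
  note F = H1_with_derivD[OF H]
  have l: "0 \<le> l" using s by simp
  have hI: "?h integrable_on {0..l}"
    using F(2) by (intro integrable_add integrable_const_ivl integrable_on_divide)
  have hI': "?h integrable_on {0..s}" and wI': "w integrable_on {0..s}"
    using integrable_on_subinterval[OF hI] integrable_on_subinterval[OF F(1)] s by auto
  have amgm: "norm (w x) \<le> ?h x" for x
  proof -
    have "2 * \<rho> * norm (w x) \<le> \<rho>\<^sup>2 + ?g x"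
      using zero_le_power2[of "norm (w x) - \<rho>"] by (simp add: power2_diff algebra_simps)
    then show ?thesis using \<rho> by (simp add: field_simps power2_eq_square)
  qed
  have "norm (v s - v 0) = norm (integral {0..s} w)"
    using F(4)[OF s] by simp
  also have "\<dots> \<le> integral {0..s} ?h"
    by (rule integral_norm_bound_integral[OF wI' hI' amgm])
  also have "\<dots> \<le> integral {0..l} ?h"
    by (rule integral_subset_le[OF _ hI' hI]) (use s \<rho> in auto)
  also have "\<dots> = \<rho> * l / 2 + integral {0..l} ?g / (2 * \<rho>)"
    using l by (simp add: integral_add[OF integrable_const_ivl integrable_on_divide[OF F(2)]])
  also have "\<dots> \<le> \<rho> * l / 2 + \<rho>\<^sup>2 / (2 * \<rho>)"
    using W F(3) \<rho> by (simp add: divide_right_mono)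
  also have "\<dots> = (l + 1) / 2 * \<rho>"
    using \<rho> by (simp add: power2_eq_square field_simps)
  finally show ?thesis .
qed

lemma H1_with_deriv_endpoint_gap_le:
  assumes H: "H1_with_deriv l v w" and \<rho>: "0 < \<rho>"
    and W: "(LINT x:{0..l}|lborel. (norm (w x))\<^sup>2) \<le> \<rho>\<^sup>2" and l: "0 \<le> l"
    and a: "norm (v 0 - a) \<le> \<rho>" and b: "norm (v l - b) \<le> \<rho>"
  shows "norm (a - b) \<le> (l + 5) / 2 * \<rho>"
proof -
  have "norm (v 0 - v l) \<le> (l + 1) / 2 * \<rho>"
    using H1_with_deriv_oscillation_le[OF H \<rho> W, of l] l by (simp add: norm_minus_commute)
  with a have "norm (a - v l) \<le> \<rho> + (l + 1) / 2 * \<rho>"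
    by (metis norm_diff_triangle_le norm_minus_commute)
  from norm_diff_triangle_le[OF this b] show ?thesis
    by (simp add: field_simps)
qed

lemma set_integral_dist_const_le:
  fixes v :: "real \<Rightarrow> 'a::euclidean_space"
  assumes l: "0 \<le> l" and cont: "continuous_on {0..l} v"
    and near: "\<And>s. s \<in> {0..l} \<Longrightarrow> norm (v s - c) \<le> B"
  shows "norm ((LINT s:{0..l}|lborel. v s) - l *\<^sub>R c) \<le> l * B"
proof -
  have si: "set_integrable lborel {0..l} v"
    by (rule borel_integrable_atLeastAtMost'[OF cont])
  have "(LINT s:{0..l}|lborel. v s) - l *\<^sub>R c = integral {0..l} (\<lambda>s. v s - c)"
    using l set_borel_integral_eq_integral[OF si] by (simp add: integral_diff[OF _ integrable_const_ivl])
  also have "norm \<dots> \<le> B * (l - 0)"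
    by (rule integral_bound) (use l near in \<open>auto intro!: continuous_intros cont\<close>)
  finally show ?thesis by (simp add: mult.commute)
qed

lemma set_integral_norm_sq_le:
  fixes v :: "real \<Rightarrow> 'a::euclidean_space"
  assumes l: "0 \<le> l" and cont: "continuous_on {0..l} v"
    and bound: "\<And>s. s \<in> {0..l} \<Longrightarrow> norm (v s) \<le> B"
  shows "(LINT s:{0..l}|lborel. (norm (v s))\<^sup>2) \<le> l * B\<^sup>2"
proof -
  have cont2: "continuous_on {0..l} (\<lambda>s. (norm (v s))\<^sup>2)"
    by (intro continuous_intros cont)
  have "(LINT s:{0..l}|lborel. (norm (v s))\<^sup>2) = integral {0..l} (\<lambda>s. (norm (v s))\<^sup>2)"
    by (rule set_borel_integral_eq_integral(2)[OF borel_integrable_atLeastAtMost'[OF cont2]])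
  also have "\<dots> \<le> norm \<dots>" by simp
  also have "\<dots> \<le> B\<^sup>2 * (l - 0)"
    by (rule integral_bound[OF l cont2]) (simp add: bound power_mono)
  finally show ?thesis by (simp add: mult.commute)
qed

lemma norm_le_if_sum_sq_le:
  fixes f :: "'i \<Rightarrow> 'a::real_normed_vector"
  assumes "finite I" "i \<in> I" "(\<Sum>j\<in>I. (norm (f j))\<^sup>2) \<le> r\<^sup>2" "0 \<le> r"
  shows "norm (f i) \<le> r"
proof -
  have "(norm (f i))\<^sup>2 \<le> (\<Sum>j\<in>I. (norm (f j))\<^sup>2)"
    by (rule member_le_sum) (use assms in auto)
  with assms show ?thesis
    by (meson order_trans power2_le_imp_le)
qed

lemma relpow_symcl_diff_le:
  fixes V :: "'v \<Rightarrow> 'a::real_normed_vector" and E :: "('v \<times> 'v) set"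
  assumes "(j, k) \<in> (E \<union> E\<inverse>) ^^ n" and "finite E"
  shows "norm (V j - V k) \<le> n * (\<Sum>(a, b)\<in>E. norm (V a - V b))"
  using assms(1)
proof (induction n arbitrary: k)
  case 0
  then show ?case by simp
next
  case (Suc n)
  then obtain m where jm: "(j, m) \<in> (E \<union> E\<inverse>) ^^ n" and mk: "(m, k) \<in> E \<union> E\<inverse>"
    by (auto elim: relpow_Suc_E)
  have "norm (V m - V k) \<le> (\<Sum>(a, b)\<in>E. norm (V a - V b))"
    using mk member_le_sum[OF _ _ assms(2), of _ "\<lambda>(a, b). norm (V a - V b)"]
    by (fastforce simp: norm_minus_commute)
  from norm_diff_triangle_le[OF Suc.IH[OF jm] this] show ?case
    by (simp add: algebra_simps)
qed

lemma sum_image_pairs_diff_le: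
  fixes V :: "'v \<Rightarrow> 'a::real_normed_vector"
  assumes "finite I"
  shows "(\<Sum>(a, b)\<in>(\<lambda>i. (src i, tgt i)) ` I. norm (V a - V b))
     \<le> (\<Sum>i\<in>I. norm (V (src i) - V (tgt i)))"
  by (rule order_trans[OF sum_image_le]) (auto simp: o_def assms)

lemma connected_graph_vertex_diff_le:
  assumes "connected_graph nV nE src tgt"
  shows "\<exists>N\<ge>0. \<forall>(V :: nat \<Rightarrow> 'a::real_normed_vector) j k. j \<in> {1..nV} \<longrightarrow> k \<in> {1..nV} \<longrightarrow>
           norm (V j - V k) \<le> N * (\<Sum>i\<in>{1..nE}. norm (V (src i) - V (tgt i)))"
proof -
  let ?E = "graph_edges nE src tgt"
  let ?P = "{1..nV} \<times> {1..nV}"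
  have "\<forall>p\<in>?P. \<exists>n. p \<in> (?E \<union> ?E\<inverse>) ^^ n"
    using assms unfolding connected_graph_def rtrancl_power by blast
  from bchoice[OF this] obtain n where n: "\<forall>p\<in>?P. p \<in> (?E \<union> ?E\<inverse>) ^^ n p"
    by blast
  have "finite ?E" unfolding graph_edges_def by simp
  have "norm (V j - V k) \<le> real (\<Sum>p\<in>?P. n p) * (\<Sum>i\<in>{1..nE}. norm (V (src i) - V (tgt i)))"
    if jk: "j \<in> {1..nV}" "k \<in> {1..nV}" for V :: "nat \<Rightarrow> 'a" and j k
  proof -
    let ?D = "\<Sum>i\<in>{1..nE}. norm (V (src i) - V (tgt i))"
    have "norm (V j - V k) \<le> n (j, k) * (\<Sum>(a, b)\<in>?E. norm (V a - V b))"
      by (rule relpow_symcl_diff_le[OF _ \<open>finite ?E\<close>]) (use n jk in blast)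
    also have "\<dots> \<le> n (j, k) * ?D"
      unfolding graph_edges_def by (rule mult_left_mono[OF sum_image_pairs_diff_le]) simp_all
    also have "\<dots> \<le> real (\<Sum>p\<in>?P. n p) * ?D"
    proof (rule mult_right_mono)
      have "n (j, k) \<le> (\<Sum>p\<in>?P. n p)"
        by (rule member_le_sum) (use jk in auto)
      then show "real (n (j, k)) \<le> real (\<Sum>p\<in>?P. n p)" by linarith
    qed (simp add: sum_nonneg)
    finally show ?thesis .
  qed
  then show ?thesis
    by (intro exI[of _ "real (\<Sum>p\<in>?P. n p)"] conjI of_nat_0_le_iff allI impI)
qed

lemma set_integral_norm_sq_nonneg: "0 \<le> (LINT s:A|lborel. (norm (f s))\<^sup>2)"
  unfolding set_lebesgue_integral_def by (rule Bochner_Integration.integral_nonneg) simp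

lemma L2N_sq_nonneg: "0 \<le> L2N_sq nE len v"
  unfolding L2N_sq_def by (intro sum_nonneg set_integral_norm_sq_nonneg)

lemma edge_le_L2N_sq:
  assumes "i \<in> {1..nE}"
  shows "(LINT s:{0..len i}|lborel. (norm (v i s))\<^sup>2) \<le> L2N_sq nE len v"
  unfolding L2N_sq_def
  by (rule member_le_sum) (use assms in \<open>auto intro: set_integral_norm_sq_nonneg\<close>)

lemma AmT_eq_src:
  assumes "i \<in> {1..nE}" "src i \<in> {1..nV}"
  shows "AmT nV nE src V i = V (src i)"
proof -
  have "{j\<in>{1..nV}. i \<in> J_minus nE src j} = {src i}"
    using assms unfolding J_minus_def by auto
  then show ?thesis unfolding AmT_def by simp
qed

lemma ApT_eq_tgt:
  assumes "i \<in> {1..nE}" "tgt i \<in> {1..nV}"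
  shows "ApT nV nE tgt V i = V (tgt i)"
proof -
  have "{j\<in>{1..nV}. i \<in> J_plus nE tgt j} = {tgt i}"
    using assms unfolding J_plus_def by auto
  then show ?thesis unfolding ApT_def by simp
qed

lemma network_near_vertex_value:
  fixes v w :: "nat \<Rightarrow> real \<Rightarrow> real^3" and V :: "nat \<Rightarrow> real^3"
  assumes ends: "\<forall>i\<in>{1..nE}. src i \<in> {1..nV} \<and> tgt i \<in> {1..nV}"
    and len: "\<forall>i\<in>{1..nE}. 0 < len i" and L: "\<And>i. i \<in> {1..nE} \<Longrightarrow> len i \<le> L"
    and N: "0 \<le> N"
    and vertex: "\<And>k. k \<in> {1..nV} \<Longrightarrow>
           norm (V k - V 1) \<le> N * (\<Sum>i\<in>{1..nE}. norm (V (src i) - V (tgt i)))"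
    and H: "\<forall>i\<in>{1..nE}. H1_with_deriv (len i) (v i) (w i)"
    and \<rho>: "0 < \<rho>"
    and bw: "L2N_sq nE len w \<le> \<rho>\<^sup>2"
    and bm: "(\<Sum>i\<in>{1..nE}. (norm (v i 0 - AmT nV nE src V i))\<^sup>2) \<le> \<rho>\<^sup>2"
    and bp: "(\<Sum>i\<in>{1..nE}. (norm (v i (len i) - ApT nV nE tgt V i))\<^sup>2) \<le> \<rho>\<^sup>2"
    and i: "i \<in> {1..nE}" and s: "s \<in> {0..len i}"
  shows "norm (v i s - V 1) \<le> (L + 3 + N * nE * (L + 5)) / 2 * \<rho>"
proof -
  let ?E = "{1..nE}"
  have W: "(LINT x:{0..len i}|lborel. (norm (w i x))\<^sup>2) \<le> \<rho>\<^sup>2" if "i \<in> ?E" for i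
    using edge_le_L2N_sq[OF that] bw by (rule order_trans)
  have am: "norm (v i 0 - V (src i)) \<le> \<rho>" if "i \<in> ?E" for i
    using norm_le_if_sum_sq_le[OF _ that bm] \<rho> AmT_eq_src[OF that] ends that by simp
  have ap: "norm (v i (len i) - V (tgt i)) \<le> \<rho>" if "i \<in> ?E" for i
    using norm_le_if_sum_sq_le[OF _ that bp] \<rho> ApT_eq_tgt[OF that] ends that by simp
  have edge: "norm (V (src i) - V (tgt i)) \<le> (L + 5) / 2 * \<rho>" if "i \<in> ?E" for i
  proof -
    have "norm (V (src i) - V (tgt i)) \<le> (len i + 5) / 2 * \<rho>"
      using H1_with_deriv_endpoint_gap_le[OF _ \<rho> W[OF that] _ am[OF that] ap[OF that]] H len that
      by (simp add: less_imp_le)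
    also have "\<dots> \<le> (L + 5) / 2 * \<rho>"
      using L[OF that] \<rho> by (simp add: divide_right_mono)
    finally show ?thesis .
  qed
  have "(\<Sum>i\<in>?E. norm (V (src i) - V (tgt i))) \<le> nE * ((L + 5) / 2 * \<rho>)"
    using sum_bounded_above[of ?E, OF edge] by simp
  then have "norm (V (src i) - V 1) \<le> N * (nE * ((L + 5) / 2 * \<rho>))"
    using vertex[of "src i"] ends i N by (meson mult_left_mono order_trans)
  then have to_vertex: "norm (v i 0 - V 1) \<le> \<rho> + N * (nE * ((L + 5) / 2 * \<rho>))"
    by (rule norm_diff_triangle_le[OF am[OF i]])
  have "norm (v i s - v i 0) \<le> (len i + 1) / 2 * \<rho>"
    using H1_with_deriv_oscillation_le[OF _ \<rho> W[OF i] s] H i by blast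
  also have "\<dots> \<le> (L + 1) / 2 * \<rho>"
    using L[OF i] \<rho> by (simp add: divide_right_mono)
  finally have "norm (v i s - V 1) \<le> (L + 1) / 2 * \<rho> + (\<rho> + N * (nE * ((L + 5) / 2 * \<rho>)))"
    using to_vertex by (rule norm_diff_triangle_le)
  then show ?thesis by (simp add: field_simps)
qed

lemma L2N_sq_le_near_constant:
  fixes v :: "nat \<Rightarrow> real \<Rightarrow> real^3"
  assumes len: "\<forall>i\<in>{1..nE}. 0 < len i"
    and cont: "\<And>i. i \<in> {1..nE} \<Longrightarrow> continuous_on {0..len i} (v i)"
    and near: "\<And>i s. i \<in> {1..nE} \<Longrightarrow> s \<in> {0..len i} \<Longrightarrow> norm (v i s - c) \<le> B"
    and mean: "norm (intN nE len v) \<le> r"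
  defines "Lt \<equiv> \<Sum>i\<in>{1..nE}. len i"
  shows "L2N_sq nE len v \<le> Lt * (2 * B + r / Lt)\<^sup>2"
proof -
  let ?E = "{1..nE}"
  have l: "0 \<le> len i" if "i \<in> ?E" for i
    using len that by (auto intro: less_imp_le)
  have Lt: "len i \<le> Lt" if "i \<in> ?E" for i
    unfolding Lt_def by (rule member_le_sum) (use l that in auto)
  have "norm (intN nE len v - Lt *\<^sub>R c) = norm (\<Sum>i\<in>?E. (LINT s:{0..len i}|lborel. v i s) - len i *\<^sub>R c)"
    unfolding intN_def Lt_def scaleR_sum_left sum_subtractf ..
  also have "\<dots> \<le> (\<Sum>i\<in>?E. len i * B)"
    by (rule order_trans[OF norm_sum sum_mono]) (use l cont near set_integral_dist_const_le in blast)
  finally have dev: "norm (intN nE len v - Lt *\<^sub>R c) \<le> Lt * B"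
    by (simp add: Lt_def sum_distrib_right)
  have "0 \<le> Lt" unfolding Lt_def by (rule sum_nonneg) (rule l)
  \<comment> \<open>the mean of \<open>v\<close> pins down the constant \<open>c\<close>\<close>
  then have mass: "Lt * norm c \<le> r + Lt * B"
    using norm_triangle_sub[of "Lt *\<^sub>R c" "intN nE len v"] mean dev
    by (simp add: norm_minus_commute)
  have c: "norm c \<le> r / Lt + B" if "i \<in> ?E" for i
  proof -
    have "0 < Lt" using len Lt[OF that] that by fastforce
    with mass show ?thesis by (simp add: field_simps)
  qed
  have bound: "norm (v i s) \<le> 2 * B + r / Lt" if "i \<in> ?E" "s \<in> {0..len i}" for i s
    using norm_triangle_sub[of "v i s" c] near[OF that] c[OF that(1)] by simp
  have "L2N_sq nE len v \<le> (\<Sum>i\<in>?E. len i * (2 * B + r / Lt)\<^sup>2)"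
    unfolding L2N_sq_def
    by (rule sum_mono) (use l cont bound set_integral_norm_sq_le in blast)
  then show ?thesis by (simp add: Lt_def sum_distrib_right)
qed

lemma network_L2_le_scaled:
  assumes conn: "connected_graph nV nE src tgt" and len: "\<forall>i\<in>{1..nE}. 0 < len i"
  obtains C :: real where "0 \<le> C"
    and "\<And>v w V \<rho>. \<forall>i\<in>{1..nE}. H1_with_deriv (len i) (v i) (w i) \<Longrightarrow> 0 < \<rho> \<Longrightarrow>
           L2N_sq nE len w \<le> \<rho>\<^sup>2 \<Longrightarrow> (norm (intN nE len v))\<^sup>2 \<le> \<rho>\<^sup>2 \<Longrightarrow>
           (\<Sum>i\<in>{1..nE}. (norm (v i 0 - AmT nV nE src V i))\<^sup>2) \<le> \<rho>\<^sup>2 \<Longrightarrow>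
           (\<Sum>i\<in>{1..nE}. (norm (v i (len i) - ApT nV nE tgt V i))\<^sup>2) \<le> \<rho>\<^sup>2 \<Longrightarrow>
           sqrt (L2N_sq nE len v) \<le> C * \<rho>"
proof -
  obtain N where N: "0 \<le> N"
    and vertex: "\<forall>(V :: nat \<Rightarrow> real^3) j k. j \<in> {1..nV} \<longrightarrow> k \<in> {1..nV} \<longrightarrow>
           norm (V j - V k) \<le> N * (\<Sum>i\<in>{1..nE}. norm (V (src i) - V (tgt i)))"
    using connected_graph_vertex_diff_le[OF conn] by blast
  have ends: "\<forall>i\<in>{1..nE}. src i \<in> {1..nV} \<and> tgt i \<in> {1..nV}" and "1 \<le> nV"
    using conn unfolding connected_graph_def by blast+
  define Lt where "Lt = (\<Sum>i\<in>{1..nE}. len i)"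
  define M where "M = (Lt + 3 + N * nE * (Lt + 5)) / 2"
  have l: "\<And>i. i \<in> {1..nE} \<Longrightarrow> 0 \<le> len i"
    using len by (auto intro: less_imp_le)
  have Lt0: "0 \<le> Lt"
    unfolding Lt_def by (rule sum_nonneg) (rule l)
  have Lt: "len i \<le> Lt" if "i \<in> {1..nE}" for i
    unfolding Lt_def by (rule member_le_sum) (use l that in auto)
  have M: "0 \<le> M" unfolding M_def using N Lt0 by simp
  show thesis
  proof (rule that[of "sqrt Lt * (2 * M + 1 / Lt)"])
    fix v w :: "nat \<Rightarrow> real \<Rightarrow> real^3" and V :: "nat \<Rightarrow> real^3" and \<rho> :: real
    assume H: "\<forall>i\<in>{1..nE}. H1_with_deriv (len i) (v i) (w i)" and \<rho>: "0 < \<rho>"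
      and bw: "L2N_sq nE len w \<le> \<rho>\<^sup>2" and bI: "(norm (intN nE len v))\<^sup>2 \<le> \<rho>\<^sup>2"
      and bm: "(\<Sum>i\<in>{1..nE}. (norm (v i 0 - AmT nV nE src V i))\<^sup>2) \<le> \<rho>\<^sup>2"
      and bp: "(\<Sum>i\<in>{1..nE}. (norm (v i (len i) - ApT nV nE tgt V i))\<^sup>2) \<le> \<rho>\<^sup>2"
    have near: "norm (v i s - V 1) \<le> M * \<rho>" if "i \<in> {1..nE}" "s \<in> {0..len i}" for i s
      unfolding M_def
      by (rule network_near_vertex_value[OF ends len Lt N vertex[rule_format] H \<rho> bw bm bp that])
        (use \<open>1 \<le> nV\<close> in auto)
    have cont: "continuous_on {0..len i} (v i)" if "i \<in> {1..nE}" for i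
      using H1_with_derivD(5) H that by blast
    have mean: "norm (intN nE len v) \<le> \<rho>"
      using power2_le_imp_le[OF bI] \<rho> by simp
    have "L2N_sq nE len v \<le> Lt * (2 * (M * \<rho>) + \<rho> / Lt)\<^sup>2"
      unfolding Lt_def by (intro L2N_sq_le_near_constant[OF len, where c = "V 1"] cont near mean)
    also have "\<dots> = (sqrt Lt)\<^sup>2 * ((2 * M + 1 / Lt) * \<rho>)\<^sup>2"
      using Lt0 by (simp add: distrib_right mult.assoc)
    also have "\<dots> = (sqrt Lt * (2 * M + 1 / Lt) * \<rho>)\<^sup>2"
      by (simp only: power_mult_distrib mult.assoc)
    finally show "sqrt (L2N_sq nE len v) \<le> sqrt Lt * (2 * M + 1 / Lt) * \<rho>"
      using Lt0 M \<rho> by (intro real_le_lsqrt) auto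
  qed (use Lt0 M in simp)
qed

lemma le_mult_sqrt_of_scaled_bounds:
  fixes x S C :: real
  assumes "0 \<le> S" "0 \<le> C" and scaled: "\<And>\<rho>. 0 < \<rho> \<Longrightarrow> S \<le> \<rho>\<^sup>2 \<Longrightarrow> x \<le> C * \<rho>"
  shows "x \<le> C * sqrt S"
proof (cases "S = 0")
  case True
  have "x \<le> 0 + e" if "0 < e" for e
  proof -
    have "x \<le> C * (e / (C + 1))"
      using scaled[of "e / (C + 1)"] that assms(2) True by simp
    also have "\<dots> \<le> e"
      using that assms(2) by (simp add: field_simps)
    finally show ?thesis by simp
  qed
  then have "x \<le> 0" by (rule field_le_epsilon)
  then show ?thesis using True by simp
next
  case False
  with assms show ?thesis by simp
qed

theorem lemma3p2:
  fixes nV nE :: nat and src tgt :: "nat \<Rightarrow> nat" and len :: "nat \<Rightarrow> real"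
  assumes "connected_graph nV nE src tgt"
    and "\<forall>i\<in>{1..nE}. len i > 0"
  shows "\<exists>C>0. \<forall>(v :: nat \<Rightarrow> real \<Rightarrow> real^3) (w :: nat \<Rightarrow> real \<Rightarrow> real^3) (V :: nat \<Rightarrow> real^3).
           (\<forall>i\<in>{1..nE}. H1_with_deriv (len i) (v i) (w i)) \<longrightarrow>
           sqrt (L2N_sq nE len v) \<le>
             C * sqrt (L2N_sq nE len w + (norm (intN nE len v))\<^sup>2
                  + (\<Sum>i\<in>{1..nE}. (norm (v i 0 - AmT nV nE src V i))\<^sup>2)
                  + (\<Sum>i\<in>{1..nE}. (norm (v i (len i) - ApT nV nE tgt V i))\<^sup>2))"
proof -
  obtain C where C: "0 \<le> C" and scaled: "\<And>v w V \<rho>. \<forall>i\<in>{1..nE}. H1_with_deriv (len i) (v i) (w i) \<Longrightarrow>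
           0 < \<rho> \<Longrightarrow> L2N_sq nE len w \<le> \<rho>\<^sup>2 \<Longrightarrow> (norm (intN nE len v))\<^sup>2 \<le> \<rho>\<^sup>2 \<Longrightarrow>
           (\<Sum>i\<in>{1..nE}. (norm (v i 0 - AmT nV nE src V i))\<^sup>2) \<le> \<rho>\<^sup>2 \<Longrightarrow>
           (\<Sum>i\<in>{1..nE}. (norm (v i (len i) - ApT nV nE tgt V i))\<^sup>2) \<le> \<rho>\<^sup>2 \<Longrightarrow>
           sqrt (L2N_sq nE len v) \<le> C * \<rho>"
    using network_L2_le_scaled[OF assms] by blast
  show ?thesis
  proof (intro exI[of _ "C + 1"] conjI allI impI)
    fix v w :: "nat \<Rightarrow> real \<Rightarrow> real^3" and V :: "nat \<Rightarrow> real^3"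
    assume H: "\<forall>i\<in>{1..nE}. H1_with_deriv (len i) (v i) (w i)"
    let ?a = "L2N_sq nE len w" and ?b = "(norm (intN nE len v))\<^sup>2"
      and ?m = "\<Sum>i\<in>{1..nE}. (norm (v i 0 - AmT nV nE src V i))\<^sup>2"
      and ?p = "\<Sum>i\<in>{1..nE}. (norm (v i (len i) - ApT nV nE tgt V i))\<^sup>2"
    have nonneg: "0 \<le> ?a" "0 \<le> ?b" "0 \<le> ?m" "0 \<le> ?p"
      by (simp_all add: L2N_sq_nonneg sum_nonneg)
    then have S: "0 \<le> ?a + ?b + ?m + ?p" by linarith
    have "sqrt (L2N_sq nE len v) \<le> C * sqrt (?a + ?b + ?m + ?p)"
    proof (rule le_mult_sqrt_of_scaled_bounds)
      fix \<rho> :: real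
      assume "0 < \<rho>" "?a + ?b + ?m + ?p \<le> \<rho>\<^sup>2"
      then show "sqrt (L2N_sq nE len v) \<le> C * \<rho>"
        using nonneg by (intro scaled[where V = V, OF H]) linarith+
    qed (use S C in auto)
    also have "\<dots> \<le> (C + 1) * sqrt (?a + ?b + ?m + ?p)"
      by (rule mult_right_mono) (use S in simp_all)
    finally show "sqrt (L2N_sq nE len v) \<le> (C + 1) * sqrt (?a + ?b + ?m + ?p)" .
  qed (use C in simp)
qed

end
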